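(* A real symmetric tensor $S\in\mathbb{R}^{n\times n\times n}$ of order 3 belongs to $\mathrm{OW}_n(\mathbb{R})$ if and only if its slices $S_1,\dots,S_n$ pairwise commute. In particular, the set of real symmetric tensors of order 3 and size $n$ admitting an orthogonal Waring decomposition is the zero set of a system of $n^2(n-1)^2/4$ polynomial equations of degree 2 in the $\binom{n+2}{3}$ independent entries of the tensor.
   Context: For a symmetric tensor $S$ (invariant under all permutations of its three indices), its $k$-th slice is the symmetric matrix $S_k=(S_{ijk})_{1\le i,j\le n}$. Identify $S$ with the cubic form $f(x)=\sum_{i,j,k}S_{ijk}x_ix_jx_k$. $\mathrm{OW}_n(\mathbb{R})$ is the set of cubic forms $f\in\mathbb{R}[x_1,\dots,x_n]_3$ that can be written $f(x)=g(Ax)$ where $A$ is a real orthogonal matrix ($A^TA=\mathrm{Id}$) and $g=\alpha_1x_1^3+\cdots+\alpha_nx_n^3$ with $\alpha_i\in\mathbb{R}$. *)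

theory Defs
  imports "HOL-Analysis.Analysis"
begin

definition sym_tensor :: "real^'n^'n^'n \<Rightarrow> bool" where
  "sym_tensor S \<longleftrightarrow> (\<forall>i j k. S$i$j$k = S$j$i$k \<and> S$i$j$k = S$i$k$j \<and> S$i$j$k = S$k$j$i)"

definition slice :: "real^'n^'n^'n \<Rightarrow> 'n \<Rightarrow> real^'n^'n" where
  "slice S k = (\<chi> i j. S$i$j$k)"

definition cubic_form :: "real^'n^'n^'n \<Rightarrow> real^'n \<Rightarrow> real" where
  "cubic_form S x = (\<Sum>i\<in>UNIV. \<Sum>j\<in>UNIV. \<Sum>k\<in>UNIV. S$i$j$k * x$i * x$j * x$k)"

definition OW :: "(real^'n \<Rightarrow> real) set" where
  "OW = {f. \<exists>A::real^'n^'n. \<exists>\<alpha>::'n \<Rightarrow> real. orthogonal_matrix A \<and>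
            (\<forall>x. f x = (\<Sum>i\<in>UNIV. \<alpha> i * ((A *v x)$i)^3))}"

end

theory Submission
  imports Defs
begin

text \<open>A symmetric tensor is determined by its cubic form (polarization), so the cubic form
of S lies in OW exactly when S is \<open>\<Sum>\<^sub>p \<alpha>\<^sub>p a\<^sub>p \<otimes> a\<^sub>p \<otimes> a\<^sub>p\<close> for the rows \<open>a\<^sub>p\<close> of an orthogonal
matrix A. Then the slices are \<open>S\<^sub>k = A\<^sup>T diag(\<alpha>\<^sub>p a\<^sub>p\<^sub>k) A\<close>, which commute. Conversely, commuting
symmetric slices have a common orthonormal eigenbasis, \<open>S\<^sub>k a\<^sub>p = \<mu>\<^sub>k\<^sub>p a\<^sub>p\<close>; contracting these
eigen-equations with \<open>a\<^sub>p\<close> and using the symmetry of S gives \<open>\<mu>\<^sub>k\<^sub>p = \<alpha>\<^sub>p a\<^sub>p\<^sub>k\<close>, which is an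
orthogonal Waring decomposition. The equations are the entries of the commutators \<open>[S\<^sub>k, S\<^sub>l]\<close>;
these are antisymmetric in (i, j) and in (k, l), so those with i < j and k < l suffice.\<close>

section \<open>Polarization of the cubic form\<close>

definition trilinear_form :: "real^'n^'n^'n \<Rightarrow> real^'n \<Rightarrow> real^'n \<Rightarrow> real^'n \<Rightarrow> real" where
  "trilinear_form S x y z = (\<Sum>i\<in>UNIV. \<Sum>j\<in>UNIV. \<Sum>k\<in>UNIV. S$i$j$k * x$i * y$j * z$k)"

lemma cubic_form_eq_trilinear_form: "cubic_form S x = trilinear_form S x x x"
  by (simp add: cubic_form_def trilinear_form_def)

lemma trilinear_form_slice:
  "trilinear_form S x y z = (\<Sum>k\<in>UNIV. z$k * (x \<bullet> (slice S k *v y)))"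
proof -
  have "trilinear_form S x y z = (\<Sum>k\<in>UNIV. \<Sum>i\<in>UNIV. \<Sum>j\<in>UNIV. S$i$j$k * x$i * y$j * z$k)"
    unfolding trilinear_form_def by (subst sum.swap) (intro sum.cong refl sum.swap)
  also have "\<dots> = (\<Sum>k\<in>UNIV. z$k * (x \<bullet> (slice S k *v y)))"
    by (simp add: slice_def inner_vec_def matrix_vector_mult_def sum_distrib_left mult_ac)
  finally show ?thesis .
qed

lemma linear_trilinear_form_1: "linear (\<lambda>x. trilinear_form S x y z)"
  by (rule linearI)
    (simp_all add: trilinear_form_slice inner_add_left sum.distrib algebra_simps sum_distrib_left)

lemma linear_trilinear_form_2: "linear (\<lambda>y. trilinear_form S x y z)"
  by (rule linearI) (simp_all add: trilinear_form_slice matrix_vector_right_distrib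
      matrix_vector_mult_scaleR inner_add_right sum.distrib algebra_simps sum_distrib_left)

lemma linear_trilinear_form_3: "linear (\<lambda>z. trilinear_form S x y z)"
  by (rule linearI) (simp_all add: trilinear_form_slice sum.distrib algebra_simps sum_distrib_left)

lemma trilinear_form_swap_12:
  assumes "sym_tensor S" shows "trilinear_form S x y z = trilinear_form S y x z"
proof -
  have "trilinear_form S x y z = (\<Sum>j\<in>UNIV. \<Sum>i\<in>UNIV. \<Sum>k\<in>UNIV. S$i$j$k * x$i * y$j * z$k)"
    unfolding trilinear_form_def by (rule sum.swap)
  also have "\<dots> = trilinear_form S y x z"
    using assms unfolding trilinear_form_def sym_tensor_def
    by (intro sum.cong refl) (metis mult.commute mult.left_commute)
  finally show ?thesis .
qed

lemma trilinear_form_swap_23: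
  assumes "sym_tensor S" shows "trilinear_form S x y z = trilinear_form S x z y"
proof -
  have "trilinear_form S x y z = (\<Sum>i\<in>UNIV. \<Sum>k\<in>UNIV. \<Sum>j\<in>UNIV. S$i$j$k * x$i * y$j * z$k)"
    unfolding trilinear_form_def by (intro sum.cong refl sum.swap)
  also have "\<dots> = trilinear_form S x z y"
    using assms unfolding trilinear_form_def sym_tensor_def
    by (intro sum.cong refl) (metis mult.commute mult.left_commute)
  finally show ?thesis .
qed

lemmas trilinear_form_add =
  linear_add[OF linear_trilinear_form_1] linear_add[OF linear_trilinear_form_2]
  linear_add[OF linear_trilinear_form_3]

lemmas trilinear_form_neg =
  linear_neg[OF linear_trilinear_form_1] linear_neg[OF linear_trilinear_form_2]
  linear_neg[OF linear_trilinear_form_3]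

lemma trilinear_form_axis: "trilinear_form S (axis i 1) (axis j 1) (axis k 1) = S$i$j$k"
  by (simp add: trilinear_form_def axis_def if_distrib[of "\<lambda>a. _ * a"] cong: if_cong)

lemma cubic_form_add:
  assumes "sym_tensor S"
  shows "cubic_form S (x + y) = cubic_form S x + 3 * trilinear_form S x y y
    + 3 * trilinear_form S y x x + cubic_form S y"
  using trilinear_form_swap_12[OF assms] trilinear_form_swap_23[OF assms]
  by (simp add: cubic_form_eq_trilinear_form trilinear_form_add)

lemma sym_tensor_eq_0_if_cubic_form_eq_0:
  assumes S: "sym_tensor S" and zero: "\<And>x. cubic_form S x = 0"
  shows "S = 0"
proof -
  have xyy: "trilinear_form S x y y = 0" for x y
    using cubic_form_add[OF S, of x y] cubic_form_add[OF S, of x "- y"]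
    by (simp add: zero trilinear_form_neg)
  have "trilinear_form S x y z = 0" for x y z
    using xyy[of x "y + z"] xyy[of x y] xyy[of x z] trilinear_form_swap_23[OF S, of x z y]
    by (simp add: trilinear_form_add)
  then show ?thesis
    by (simp add: vec_eq_iff flip: trilinear_form_axis)
qed

section \<open>Simultaneous diagonalization of commuting symmetric matrices\<close>

lemma inner_symmetric_matrix:
  fixes M :: "real^'n^'n"
  assumes "transpose M = M"
  shows "x \<bullet> (M *v y) = (M *v x) \<bullet> y"
  by (metis assms dot_lmul_matrix vector_transpose_matrix)

lemma eigenvector_if_max_quadratic_form:
  fixes M :: "real^'n^'n"
  assumes sym: "transpose M = M" and V: "subspace V" and inv: "\<forall>v\<in>V. M *v v \<in> V"
    and xV: "x \<in> V" and xx: "x \<bullet> x = 1"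
    and max: "\<And>w. w \<in> V \<Longrightarrow> w \<bullet> (M *v w) \<le> (x \<bullet> (M *v x)) * (w \<bullet> w)"
  shows "M *v x = (x \<bullet> (M *v x)) *\<^sub>R x"
proof (rule ccontr)
  define lam where "lam = x \<bullet> (M *v x)"
  define y where "y = M *v x - lam *\<^sub>R x"
  assume "M *v x \<noteq> (x \<bullet> (M *v x)) *\<^sub>R x"
  then have ny: "y \<bullet> y > 0" unfolding y_def lam_def by simp
  have xy: "x \<bullet> y = 0" unfolding y_def lam_def using xx by (simp add: inner_diff_right)
  have yMx: "y \<bullet> (M *v x) = y \<bullet> y"
    unfolding y_def
    by (simp add: inner_diff_left inner_diff_right xy[unfolded y_def] inner_commute xx lam_def)
  define C where "C = lam * (y \<bullet> y) - y \<bullet> (M *v y)"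
  \<comment> \<open>maximality of x along the line \<open>x + t y\<close> bounds the first-order term by a second-order one\<close>
  have "2 * t * (y \<bullet> y) \<le> t\<^sup>2 * C" for t
  proof -
    have "x + t *\<^sub>R y \<in> V" using xV V inv unfolding y_def
      by (simp add: subspace_add subspace_scale subspace_diff)
    moreover have "(x + t *\<^sub>R y) \<bullet> (M *v (x + t *\<^sub>R y))
        = lam + 2 * t * (y \<bullet> y) + t\<^sup>2 * (y \<bullet> (M *v y))"
      using yMx inner_symmetric_matrix[OF sym, of x y]
      by (simp add: lam_def matrix_vector_right_distrib matrix_vector_mult_scaleR inner_add_left
          inner_add_right inner_commute power2_eq_square algebra_simps)
    moreover have "(x + t *\<^sub>R y) \<bullet> (x + t *\<^sub>R y) = 1 + t\<^sup>2 * (y \<bullet> y)"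
      using xx xy by (simp add: inner_add_left inner_add_right inner_commute power2_eq_square)
    ultimately show ?thesis
      using max[of "x + t *\<^sub>R y"] unfolding C_def lam_def[symmetric] by (simp add: algebra_simps)
  qed
  define t where "t = (y \<bullet> y) / (\<bar>C\<bar> + 1)"
  have t: "t > 0" "t * (\<bar>C\<bar> + 1) = y \<bullet> y" using ny unfolding t_def by auto
  have "t * (2 * (y \<bullet> y)) \<le> t * (t * C)"
    using \<open>2 * t * (y \<bullet> y) \<le> t\<^sup>2 * C\<close> by (simp add: power2_eq_square algebra_simps)
  then have "2 * (y \<bullet> y) \<le> t * C" using t by simp
  also have "\<dots> < t * (\<bar>C\<bar> + 1)" using t by (intro mult_strict_left_mono) auto
  finally show False using t ny by simp
qed

lemma symmetric_matrix_eigenvector_in_invariant_subspace: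
  fixes M :: "real^'n^'n"
  assumes sym: "transpose M = M" and V: "subspace V" "V \<noteq> {0}" and inv: "\<forall>v\<in>V. M *v v \<in> V"
  shows "\<exists>x\<in>V. x \<noteq> 0 \<and> (\<exists>\<mu>. M *v x = \<mu> *\<^sub>R x)"
proof -
  define K where "K = sphere 0 1 \<inter> V"
  obtain v where v: "v \<in> V" "v \<noteq> 0" using V subspace_0 by blast
  have "v /\<^sub>R norm v \<in> K" unfolding K_def using v V by (simp add: subspace_scale)
  moreover have "compact K"
    unfolding K_def using V by (intro compact_Int_closed compact_sphere closed_subspace)
  ultimately obtain x where x: "x \<in> K"
    and max: "\<And>u. u \<in> K \<Longrightarrow> u \<bullet> (M *v u) \<le> x \<bullet> (M *v x)"
    using continuous_attains_sup[of K "\<lambda>u. u \<bullet> (M *v u)"] by (fastforce intro: continuous_intros)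
  have xV: "x \<in> V" and xx: "x \<bullet> x = 1" using x unfolding K_def by (auto simp: norm_eq_1)
  have "w \<bullet> (M *v w) \<le> (x \<bullet> (M *v x)) * (w \<bullet> w)" if "w \<in> V" for w
  proof (cases "w = 0")
    case False
    have "w /\<^sub>R norm w \<in> K" unfolding K_def using that V False by (simp add: subspace_scale)
    from max[OF this] False show ?thesis
      by (simp add: matrix_vector_mult_scaleR power2_norm_eq_inner[symmetric] divide_simps
          power2_eq_square)
  qed simp
  then have "M *v x = (x \<bullet> (M *v x)) *\<^sub>R x"
    by (rule eigenvector_if_max_quadratic_form[OF sym V(1) inv xV xx])
  moreover have "x \<noteq> 0" using xx by auto
  ultimately show ?thesis using xV by blast
qed

lemma commuting_symmetric_matrices_common_eigenvector:
  fixes F :: "'k \<Rightarrow> real^'n^'n"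
  assumes sym: "\<And>k. transpose (F k) = F k" and comm: "\<And>k l. F k ** F l = F l ** F k"
  shows "subspace V \<Longrightarrow> V \<noteq> {0} \<Longrightarrow> \<forall>k. \<forall>v\<in>V. F k *v v \<in> V \<Longrightarrow>
    \<exists>x\<in>V. x \<noteq> 0 \<and> (\<forall>k. \<exists>\<mu>. F k *v x = \<mu> *\<^sub>R x)"
proof (induction "dim V" arbitrary: V rule: less_induct)
  case less
  show ?case
  proof (cases "\<forall>k. \<exists>\<mu>. \<forall>v\<in>V. F k *v v = \<mu> *\<^sub>R v")
    case True
    then show ?thesis using less.prems subspace_0 by blast
  next
    case False
    then obtain k where k: "\<And>\<mu>. \<exists>v\<in>V. F k *v v \<noteq> \<mu> *\<^sub>R v" by blast
    obtain x \<mu> where x: "x \<in> V" "x \<noteq> 0" "F k *v x = \<mu> *\<^sub>R x"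
      using symmetric_matrix_eigenvector_in_invariant_subspace[OF sym less.prems(1,2)] less.prems(3)
      by blast
    \<comment> \<open>the eigenspace of F k is proper, and invariant under every F l by commutativity\<close>
    define W where "W = {v\<in>V. F k *v v = \<mu> *\<^sub>R v}"
    have W: "subspace W" "W \<noteq> {0}" "W \<subseteq> V"
      using less.prems(1) x unfolding W_def subspace_def
      by (auto simp: matrix_vector_right_distrib matrix_vector_mult_scaleR scaleR_add_right)
    have "F k *v (F l *v v) = F l *v (F k *v v)" for l v
      by (metis comm matrix_vector_mul_assoc)
    then have Winv: "\<forall>l. \<forall>v\<in>W. F l *v v \<in> W"
      using less.prems(3) unfolding W_def by (auto simp: matrix_vector_mult_scaleR)
    have dimW: "dim W < dim V"
    proof -
      obtain v where "v \<in> V" "F k *v v \<noteq> \<mu> *\<^sub>R v" using k by blast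
      then have "W \<subset> V" using W unfolding W_def by blast
      then show ?thesis using W less.prems(1) by (metis dim_psubset span_eq_iff)
    qed
    show ?thesis using less.hyps[OF dimW W(1,2) Winv] W(3) by blast
  qed
qed

lemma commuting_symmetric_matrices_common_orthonormal_eigenbasis:
  fixes F :: "'k \<Rightarrow> real^'n^'n"
  assumes sym: "\<And>k. transpose (F k) = F k" and comm: "\<And>k l. F k ** F l = F l ** F k"
  shows "subspace V \<Longrightarrow> \<forall>k. \<forall>v\<in>V. F k *v v \<in> V \<Longrightarrow>
    \<exists>B\<subseteq>V. span B = V \<and> pairwise orthogonal B \<and>
       (\<forall>b\<in>B. norm b = 1 \<and> (\<forall>k. \<exists>\<mu>. F k *v b = \<mu> *\<^sub>R b))"
proof (induction "dim V" arbitrary: V rule: less_induct)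
  case less
  show ?case
  proof (cases "V = {0}")
    case True
    then show ?thesis by (intro exI[of _ "{}"]) auto
  next
    case False
    obtain x where x: "x \<in> V" "x \<noteq> 0" "\<forall>k. \<exists>\<mu>. F k *v x = \<mu> *\<^sub>R x"
      using commuting_symmetric_matrices_common_eigenvector[OF sym comm less.prems(1) False
          less.prems(2)]
      by blast
    define u where "u = x /\<^sub>R norm x"
    have u: "u \<in> V" "norm u = 1" using x less.prems(1) unfolding u_def by (auto simp: subspace_scale)
    then have uu: "u \<bullet> u = 1" by (simp add: norm_eq_1)
    have ueig: "\<forall>k. \<exists>\<mu>. F k *v u = \<mu> *\<^sub>R u"
    proof
      fix k
      obtain \<mu> where "F k *v x = \<mu> *\<^sub>R x" using x(3) by blast
      then show "\<exists>\<mu>. F k *v u = \<mu> *\<^sub>R u" unfolding u_def by (auto simp: matrix_vector_mult_scaleR)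
    qed
    define W where "W = {v\<in>V. u \<bullet> v = 0}"
    have W: "subspace W" "W \<subseteq> V"
      using less.prems(1) unfolding W_def subspace_def by (auto simp: inner_add_right)
    \<comment> \<open>symmetry makes the orthogonal complement of a common eigenvector invariant\<close>
    have "u \<bullet> (F l *v v) = 0" if "v \<in> W" for l v
    proof -
      obtain \<mu> where "F l *v u = \<mu> *\<^sub>R u" using ueig by blast
      then show ?thesis using that inner_symmetric_matrix[OF sym, of u l v] unfolding W_def by simp
    qed
    then have Winv: "\<forall>l. \<forall>v\<in>W. F l *v v \<in> W"
      using less.prems(2) W(2) unfolding W_def by blast
    have dimW: "dim W < dim V"
    proof -
      have "u \<notin> W" using uu unfolding W_def by simp
      then have "W \<subset> V" using W u by blast
      then show ?thesis using W less.prems(1) by (metis dim_psubset span_eq_iff)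
    qed
    obtain B where B: "B \<subseteq> W" "span B = W" "pairwise orthogonal B"
        "\<forall>b\<in>B. norm b = 1 \<and> (\<forall>k. \<exists>\<mu>. F k *v b = \<mu> *\<^sub>R b)"
      using less.hyps[OF dimW W(1) Winv] by blast
    have "V \<subseteq> span (insert u B)"
    proof
      fix v assume v: "v \<in> V"
      have "v - (u \<bullet> v) *\<^sub>R u \<in> span B"
        unfolding B(2) W_def using v u uu less.prems(1)
        by (simp add: subspace_diff subspace_scale inner_diff_right)
      then have "v - (u \<bullet> v) *\<^sub>R u \<in> span (insert u B)"
        using span_mono[OF subset_insertI] by blast
      moreover have "(u \<bullet> v) *\<^sub>R u \<in> span (insert u B)" by (simp add: span_base span_scale)
      ultimately have "v - (u \<bullet> v) *\<^sub>R u + (u \<bullet> v) *\<^sub>R u \<in> span (insert u B)"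
        by (rule span_add)
      then show "v \<in> span (insert u B)" by simp
    qed
    moreover have "insert u B \<subseteq> V" using B(1) W(2) u(1) by blast
    moreover have "pairwise orthogonal (insert u B)"
      using B(1,3) unfolding pairwise_insert W_def orthogonal_def by (auto simp: inner_commute)
    moreover have "\<forall>b\<in>insert u B. norm b = 1 \<and> (\<forall>k. \<exists>\<mu>. F k *v b = \<mu> *\<^sub>R b)"
      using B(4) u(2) ueig by blast
    ultimately show ?thesis
      using span_minimal[OF _ less.prems(1), of "insert u B"] by blast
  qed
qed

lemma orthogonal_matrix_with_rows_in_orthonormal_basis:
  fixes B :: "(real^'n) set"
  assumes span: "span B = UNIV" and orth: "pairwise orthogonal B" and unit: "\<forall>b\<in>B. norm b = 1"
  shows "\<exists>Q. orthogonal_matrix Q \<and> (\<forall>p. Q$p \<in> B)"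
proof -
  have "independent B" using orth unit pairwise_orthogonal_independent by fastforce
  then have "finite B" "card B = CARD('n)"
    using independent_bound dim_span_eq_card_independent[of B] span by auto
  then obtain g where g: "bij_betw g (UNIV::'n set) B"
    using finite_same_card_bij[of "UNIV::'n set" B] by auto
  define Q :: "real^'n^'n" where "Q = (\<chi> p. g p)"
  have "row p Q = g p" for p by (simp add: row_def Q_def vec_eq_iff)
  moreover have "g p \<in> B" "p \<noteq> q \<Longrightarrow> g p \<noteq> g q" for p q
    using g by (auto simp: bij_betw_def inj_def)
  ultimately have "orthogonal_matrix Q"
    using orth unit unfolding orthogonal_matrix_orthonormal_rows pairwise_def by auto
  then show ?thesis using \<open>\<And>p. g p \<in> B\<close> by (auto simp: Q_def)
qed

lemma commuting_symmetric_matrices_orthogonally_diagonalizable: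
  fixes F :: "'k \<Rightarrow> real^'n^'n"
  assumes "\<And>k. transpose (F k) = F k" and "\<And>k l. F k ** F l = F l ** F k"
  shows "\<exists>Q. orthogonal_matrix Q \<and> (\<forall>k p. \<exists>\<mu>. F k *v Q$p = \<mu> *\<^sub>R Q$p)"
proof -
  obtain B where "span B = UNIV" "pairwise orthogonal B"
      "\<forall>b\<in>B. norm b = 1 \<and> (\<forall>k. \<exists>\<mu>. F k *v b = \<mu> *\<^sub>R b)"
    using commuting_symmetric_matrices_common_orthonormal_eigenbasis[of F, OF assms subspace_UNIV]
    by blast
  then show ?thesis using orthogonal_matrix_with_rows_in_orthonormal_basis by metis
qed

section \<open>Orthogonal Waring tensors\<close>

definition diag_matrix :: "('n \<Rightarrow> real) \<Rightarrow> real^'n^'n" where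
  "diag_matrix d = (\<chi> p q. if p = q then d p else 0)"

lemma diag_matrix_mult: "diag_matrix d ** diag_matrix e = diag_matrix (\<lambda>p. d p * e p)"
  by (simp add: diag_matrix_def matrix_matrix_mult_def vec_eq_iff if_distrib[of "\<lambda>a. a * _"]
      cong: if_cong)

lemma conj_diag_matrix_component:
  "(transpose A ** diag_matrix d ** A)$i$j = (\<Sum>p\<in>UNIV. A$p$i * d p * A$p$j)"
  by (simp add: diag_matrix_def matrix_matrix_mult_def transpose_def sum_distrib_right
      if_distrib[of "\<lambda>a. _ * a"] cong: if_cong)

lemma conj_diag_matrix_if_eigenvector_rows:
  fixes M Q :: "real^'n^'n"
  assumes Q: "orthogonal_matrix Q" and eig: "\<And>p. M *v Q$p = d p *\<^sub>R Q$p"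
  shows "M = transpose Q ** diag_matrix d ** Q"
proof -
  have MQ: "M ** transpose Q = transpose Q ** diag_matrix d"
  proof -
    have "(M ** transpose Q)$i$p = (M *v Q$p)$i" for i p
      by (simp add: matrix_matrix_mult_def matrix_vector_mult_def transpose_def)
    then show ?thesis
      by (simp add: vec_eq_iff eig diag_matrix_def matrix_matrix_mult_def transpose_def
          if_distrib[of "\<lambda>a. _ * a"] cong: if_cong)
  qed
  have "M = M ** (transpose Q ** Q)"
    using Q by (simp add: orthogonal_matrix_def)
  also have "\<dots> = transpose Q ** diag_matrix d ** Q"
    by (metis MQ matrix_mul_assoc)
  finally show ?thesis .
qed

definition ow_tensor :: "real^'n^'n \<Rightarrow> ('n \<Rightarrow> real) \<Rightarrow> real^'n^'n^'n" where
  "ow_tensor A \<alpha> = (\<chi> i j k. \<Sum>p\<in>UNIV. \<alpha> p * A$p$i * A$p$j * A$p$k)"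

lemma sym_tensor_ow_tensor: "sym_tensor (ow_tensor A \<alpha>)"
  by (simp add: sym_tensor_def ow_tensor_def mult_ac)

lemma cubic_form_ow_tensor: "cubic_form (ow_tensor A \<alpha>) x = (\<Sum>p\<in>UNIV. \<alpha> p * ((A *v x)$p)^3)"
proof -
  have cube: "(\<Sum>i\<in>UNIV. a i)^3 = (\<Sum>i\<in>UNIV. \<Sum>j\<in>UNIV. \<Sum>k\<in>UNIV. a i * a j * (a k::real))" for a
    by (simp add: power3_eq_cube sum_product sum_distrib_left sum_distrib_right mult_ac)
  have "cubic_form (ow_tensor A \<alpha>) x = (\<Sum>i\<in>UNIV. \<Sum>j\<in>UNIV. \<Sum>k\<in>UNIV. \<Sum>p\<in>UNIV.
      \<alpha> p * (A$p$i * x$i) * (A$p$j * x$j) * (A$p$k * x$k))"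
    by (simp add: cubic_form_def ow_tensor_def sum_distrib_right sum_distrib_left mult_ac)
  also have "\<dots> = (\<Sum>i\<in>UNIV. \<Sum>j\<in>UNIV. \<Sum>p\<in>UNIV. \<Sum>k\<in>UNIV.
      \<alpha> p * (A$p$i * x$i) * (A$p$j * x$j) * (A$p$k * x$k))"
    by (intro sum.cong refl sum.swap)
  also have "\<dots> = (\<Sum>i\<in>UNIV. \<Sum>p\<in>UNIV. \<Sum>j\<in>UNIV. \<Sum>k\<in>UNIV.
      \<alpha> p * (A$p$i * x$i) * (A$p$j * x$j) * (A$p$k * x$k))"
    by (intro sum.cong refl sum.swap)
  also have "\<dots> = (\<Sum>p\<in>UNIV. \<Sum>i\<in>UNIV. \<Sum>j\<in>UNIV. \<Sum>k\<in>UNIV.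
      \<alpha> p * (A$p$i * x$i) * (A$p$j * x$j) * (A$p$k * x$k))"
    by (rule sum.swap)
  also have "\<dots> = (\<Sum>p\<in>UNIV. \<alpha> p * ((A *v x)$p)^3)"
    by (simp add: matrix_vector_mult_def cube sum_distrib_left mult_ac)
  finally show ?thesis .
qed

lemma slice_ow_tensor:
  "slice (ow_tensor A \<alpha>) k = transpose A ** diag_matrix (\<lambda>p. \<alpha> p * A$p$k) ** A"
  by (simp add: vec_eq_iff slice_def ow_tensor_def conj_diag_matrix_component mult_ac)

lemma slices_ow_tensor_commute:
  fixes A :: "real^'n^'n"
  assumes "orthogonal_matrix A"
  shows "slice (ow_tensor A \<alpha>) k ** slice (ow_tensor A \<alpha>) l
       = slice (ow_tensor A \<alpha>) l ** slice (ow_tensor A \<alpha>) k"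
proof -
  have "(transpose A ** D ** A) ** (transpose A ** E ** A) = transpose A ** (D ** E) ** A"
    for D E :: "real^'n^'n"
  proof -
    have "(transpose A ** D ** A) ** (transpose A ** E ** A)
        = transpose A ** D ** (A ** transpose A) ** E ** A"
      by (simp add: matrix_mul_assoc)
    also have "\<dots> = transpose A ** (D ** E) ** A"
      using assms by (simp add: orthogonal_matrix_def matrix_mul_assoc)
    finally show ?thesis .
  qed
  then show ?thesis by (simp add: slice_ow_tensor diag_matrix_mult mult.commute)
qed

lemma sym_tensor_diff: "sym_tensor S \<Longrightarrow> sym_tensor T \<Longrightarrow> sym_tensor (S - T)"
  by (simp add: sym_tensor_def)

lemma cubic_form_diff: "cubic_form (S - T) x = cubic_form S x - cubic_form T x"
  by (simp add: cubic_form_def algebra_simps sum_subtractf)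

lemma cubic_form_in_OW_iff:
  assumes "sym_tensor S"
  shows "cubic_form S \<in> OW \<longleftrightarrow> (\<exists>A \<alpha>. orthogonal_matrix A \<and> S = ow_tensor A \<alpha>)"
proof
  assume "cubic_form S \<in> OW"
  then obtain A \<alpha> where A: "orthogonal_matrix A"
    and f: "\<And>x. cubic_form S x = (\<Sum>i\<in>UNIV. \<alpha> i * ((A *v x)$i)^3)"
    unfolding OW_def by blast
  have "S - ow_tensor A \<alpha> = 0"
    by (rule sym_tensor_eq_0_if_cubic_form_eq_0)
      (simp_all add: sym_tensor_diff assms sym_tensor_ow_tensor cubic_form_diff f
        cubic_form_ow_tensor)
  then show "\<exists>A \<alpha>. orthogonal_matrix A \<and> S = ow_tensor A \<alpha>" using A by auto
qed (use cubic_form_ow_tensor in \<open>force simp: OW_def\<close>)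

lemma ow_tensor_if_slices_diagonal_in_orthonormal_basis:
  assumes S: "sym_tensor S" and Q: "orthogonal_matrix Q"
    and eig: "\<And>k p. slice S k *v Q$p = \<mu> k p *\<^sub>R Q$p"
  shows "S = ow_tensor Q (\<lambda>p. \<Sum>l\<in>UNIV. Q$p$l * \<mu> l p)"
proof -
  have unit: "Q$p \<bullet> Q$p = 1" for p
    using Q unfolding orthogonal_matrix_orthonormal_rows by (metis norm_eq_1 row_def vec_lambda_eta)
  have eig_component: "(\<Sum>j\<in>UNIV. S$i$j$k * Q$p$j) = \<mu> i p * Q$p$k" for i k p
  proof -
    have "(\<Sum>j\<in>UNIV. S$i$j$k * Q$p$j) = (slice S i *v Q$p)$k"
      using S by (simp add: slice_def matrix_vector_mult_def sym_tensor_def)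
    then show ?thesis by (simp add: eig)
  qed
  \<comment> \<open>contract the eigen-equation of slice k with \<open>Q$p\<close> and use the symmetry of S\<close>
  have eigenvalue: "\<mu> k p = (\<Sum>l\<in>UNIV. Q$p$l * \<mu> l p) * Q$p$k" for k p
  proof -
    have "\<mu> k p = Q$p \<bullet> (slice S k *v Q$p)" by (simp add: eig unit)
    also have "\<dots> = (\<Sum>i\<in>UNIV. Q$p$i * (\<Sum>j\<in>UNIV. S$i$j$k * Q$p$j))"
      by (simp add: inner_vec_def slice_def matrix_vector_mult_def)
    also have "\<dots> = (\<Sum>l\<in>UNIV. Q$p$l * \<mu> l p) * Q$p$k"
      by (simp only: eig_component) (simp add: sum_distrib_left mult_ac)
    finally show ?thesis .
  qed
  have "S$i$j$k = ow_tensor Q (\<lambda>p. \<Sum>l\<in>UNIV. Q$p$l * \<mu> l p) $i$j$k" for i j k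
  proof -
    have "S$i$j$k = (\<Sum>p\<in>UNIV. Q$p$i * \<mu> k p * Q$p$j)"
      using conj_diag_matrix_if_eigenvector_rows[OF Q eig, of k]
      by (simp add: vec_eq_iff slice_def conj_diag_matrix_component)
    also have "\<dots> = ow_tensor Q (\<lambda>p. \<Sum>l\<in>UNIV. Q$p$l * \<mu> l p) $i$j$k"
      unfolding ow_tensor_def by (simp add: eigenvalue[of k] mult_ac)
    finally show ?thesis .
  qed
  then show ?thesis by (simp add: vec_eq_iff)
qed

lemma cubic_form_in_OW_iff_slices_commute:
  assumes S: "sym_tensor S"
  shows "cubic_form S \<in> OW \<longleftrightarrow> (\<forall>k l. slice S k ** slice S l = slice S l ** slice S k)"
proof
  assume "cubic_form S \<in> OW"
  then show "\<forall>k l. slice S k ** slice S l = slice S l ** slice S k"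
    using cubic_form_in_OW_iff[OF S] slices_ow_tensor_commute by blast
next
  assume comm: "\<forall>k l. slice S k ** slice S l = slice S l ** slice S k"
  have "transpose (slice S k) = slice S k" for k
    using S by (simp add: sym_tensor_def vec_eq_iff transpose_def slice_def)
  then obtain Q where Q: "orthogonal_matrix Q" and "\<forall>k p. \<exists>\<mu>. slice S k *v Q$p = \<mu> *\<^sub>R Q$p"
    using commuting_symmetric_matrices_orthogonally_diagonalizable[of "slice S"] comm by blast
  then obtain \<mu> where "\<And>k p. slice S k *v Q$p = \<mu> k p *\<^sub>R Q$p" by metis
  then have "S = ow_tensor Q (\<lambda>p. \<Sum>l\<in>UNIV. Q$p$l * \<mu> l p)"
    by (rule ow_tensor_if_slices_diagonal_in_orthonormal_basis[OF S Q])
  then show "cubic_form S \<in> OW" using cubic_form_in_OW_iff[OF S] Q by blast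
qed

section \<open>The commutator equations\<close>

lemma zero_if_antisymmetric_and_zero_if_less:
  fixes f :: "'a::linorder \<Rightarrow> 'a \<Rightarrow> real"
  assumes "\<And>x y. f y x = - f x y" and "\<And>x y. x < y \<Longrightarrow> f x y = 0"
  shows "f x y = 0"
  using assms by (metis linorder_neqE add.inverse_neutral neg_equal_zero)

definition slice_commutator :: "real^'n^'n^'n \<Rightarrow> 'n \<Rightarrow> 'n \<Rightarrow> 'n \<Rightarrow> 'n \<Rightarrow> real" where
  "slice_commutator S i j k l = (\<Sum>m\<in>UNIV. S$i$m$k * S$m$j$l - S$i$m$l * S$m$j$k)"

lemma slice_commutator_component:
  "(slice S k ** slice S l)$i$j - (slice S l ** slice S k)$i$j = slice_commutator S i j k l"
  by (simp add: slice_commutator_def matrix_matrix_mult_def slice_def sum_subtractf)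

lemma slice_commutator_swap_slices: "slice_commutator S i j l k = - slice_commutator S i j k l"
  by (simp add: slice_commutator_def sum_negf[symmetric] algebra_simps)

lemma slice_commutator_swap_indices:
  assumes "sym_tensor S"
  shows "slice_commutator S j i k l = - slice_commutator S i j k l"
  unfolding slice_commutator_def sum_negf[symmetric]
  using assms by (intro sum.cong refl) (auto simp: sym_tensor_def algebra_simps)

lemma slices_commute_iff_ordered_equations:
  fixes S :: "real^('n::{finite,linorder})^('n::{finite,linorder})^('n::{finite,linorder})"
  assumes "sym_tensor S"
  shows "(\<forall>k l. slice S k ** slice S l = slice S l ** slice S k) \<longleftrightarrow>
         (\<forall>i j k l. i < j \<and> k < l \<longrightarrow> slice_commutator S i j k l = 0)"
proof -
  have "(\<forall>k l. slice S k ** slice S l = slice S l ** slice S k) \<longleftrightarrow>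
      (\<forall>i j k l. slice_commutator S i j k l = 0)"
    by (auto simp: vec_eq_iff simp flip: slice_commutator_component)
  also have "\<dots> \<longleftrightarrow> (\<forall>i j k l. i < j \<and> k < l \<longrightarrow> slice_commutator S i j k l = 0)"
  proof (intro iffI allI impI)
    fix i j k l
    assume ordered: "\<forall>i j k l. i < j \<and> k < l \<longrightarrow> slice_commutator S i j k l = 0"
    have less: "slice_commutator S i j k l = 0" if "i < j" for i j
      by (rule zero_if_antisymmetric_and_zero_if_less[of "slice_commutator S i j"])
        (use slice_commutator_swap_slices ordered that in blast)+
    show "slice_commutator S i j k l = 0"
      by (rule zero_if_antisymmetric_and_zero_if_less[of "\<lambda>i j. slice_commutator S i j k l"])
        (use slice_commutator_swap_indices[OF assms] less in blast)+
  qed auto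
  finally show ?thesis .
qed

lemma card_ordered_pairs:
  "card {(i::'a::{finite,linorder}, j). i < j} = CARD('a) choose 2"
proof -
  have "bij_betw (\<lambda>(i, j). {i, j}) {(i::'a, j). i < j} {A. A \<subseteq> UNIV \<and> card A = 2}"
  proof (rule bij_betwI')
    show "(case p of (i, j) \<Rightarrow> {i, j}) = (case q of (i, j) \<Rightarrow> {i, j}) \<longleftrightarrow> p = q"
      if "p \<in> {(i, j). i < j}" "q \<in> {(i, j). i < j}" for p q :: "'a \<times> 'a"
      using that by (auto simp: doubleton_eq_iff dest: order.asym)
    show "(case p of (i, j) \<Rightarrow> {i, j}) \<in> {A. A \<subseteq> UNIV \<and> card A = 2}"
      if "p \<in> {(i, j). i < j}" for p :: "'a \<times> 'a"
      using that by (auto simp: card_insert_if)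
    show "\<exists>p\<in>{(i, j). i < j}. A = (case p of (i, j) \<Rightarrow> {i, j})"
      if A: "A \<in> {A. A \<subseteq> UNIV \<and> card A = 2}" for A :: "'a set"
    proof -
      obtain x y where "A = {x, y}" "x \<noteq> y" using A by (auto simp: card_2_iff)
      then show ?thesis
        by (intro bexI[of _ "(min x y, max x y)"]) (auto simp: min_def max_def)
    qed
  qed
  then have "card {(i::'a, j). i < j} = card {A. A \<subseteq> (UNIV::'a set) \<and> card A = 2}"
    by (rule bij_betw_same_card)
  also have "\<dots> = CARD('a) choose 2" by (rule n_subsets) simp
  finally show ?thesis .
qed

lemma card_pairs_of_ordered_pairs:
  "card {((i::'a::{finite,linorder}, j::'a), (k::'a, l::'a)). i < j \<and> k < l}
     = CARD('a)^2 * (CARD('a) - 1)^2 div 4"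
proof -
  have "{((i::'a, j::'a), (k::'a, l::'a)). i < j \<and> k < l} = {(i, j). i < j} \<times> {(k, l). k < l}"
    by auto
  then have "card {((i::'a, j::'a), (k::'a, l::'a)). i < j \<and> k < l} = (CARD('a) choose 2)^2"
    by (simp add: card_cartesian_product card_ordered_pairs power2_eq_square)
  also have "\<dots> = (CARD('a) * (CARD('a) - 1))^2 div 4"
  proof -
    obtain c where "CARD('a) * (CARD('a) - 1) = 2 * c"
      using evenE[of "CARD('a) * (CARD('a) - 1)"] by fastforce
    then show ?thesis by (simp add: choose_two power_mult_distrib)
  qed
  finally show ?thesis by (simp add: power_mult_distrib)
qed

theorem theorem8:
  fixes S :: "real^('n::{finite,linorder})^('n::{finite,linorder})^('n::{finite,linorder})"
  assumes "sym_tensor S"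
  shows "(cubic_form S \<in> OW \<longleftrightarrow> (\<forall>k l. slice S k ** slice S l = slice S l ** slice S k))
    \<and> (cubic_form S \<in> OW \<longleftrightarrow>
         (\<forall>i j k l. i < j \<and> k < l \<longrightarrow>
            (\<Sum>m\<in>UNIV. S$i$m$k * S$m$j$l - S$i$m$l * S$m$j$k) = 0))
    \<and> card {((i::'n, j::'n), (k::'n, l::'n)). i < j \<and> k < l}
        = CARD('n)^2 * (CARD('n) - 1)^2 div 4"
  using cubic_form_in_OW_iff_slices_commute[OF assms] slices_commute_iff_ordered_equations[OF assms]
    card_pairs_of_ordered_pairs
  unfolding slice_commutator_def by simp

end
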